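(* Let $n\ge1$ and let $A_1,\dots,A_n$ be events in a probability space. Then \[ \Pr\Big(\bigcup_{i=1}^n A_i\Big) \;\ge\; \frac{1}{\lceil n/2\rceil}\Big(\sum_{i=1}^n\Pr(A_i) - \frac{2}{n}\sum_{1\le i<j\le n}\Pr(A_i\cap A_j)\Big). \] *)

theory Defs
  imports "HOL-Probability.Probability"
begin

end

theory Submission
  imports Defs
begin

(* Write U for the union of A_1,...,A_n and m = ceil(n/2).  The inequality
   is the expectation of a pointwise inequality between random variables:
   if a point lies in exactly k of the events, then
     sum_i 1_{A_i} = k   and   sum_{i<j} 1_{A_i cap A_j} = k(k-1)/2,
   so the right-hand integrand equals (k - k(k-1)/n)/m = k(n+1-k)/(nm).
   This is 0 for k = 0 and at most 1 = 1_U for 1 <= k <= n, because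
   k(n+1-k) <= nm whenever n <= 2m.

   Linearity of the
   integral for finite sums of indicators then computes the expectation of
   the right-hand integrand, and the theorem follows by monotonicity of the
   integral. *)

text \<open>The index set of pairs \<open>i < j\<close> in \<open>{1..n}\<close>, written as a dependent product so
  that sums over it can be computed as iterated sums.\<close>

lemma ordered_pairs_eq_Sigma:
  "{(i, j). 1 \<le> i \<and> i < j \<and> j \<le> (n :: nat)} = (SIGMA i:{1..n}. {i<..n})"
  by auto

lemma sum_ordered_pairs_square:
  fixes x :: "nat \<Rightarrow> 'a :: comm_ring_1"
  shows "2 * (\<Sum>(i, j)\<in>{(i, j). 1 \<le> i \<and> i < j \<and> j \<le> n}. x i * x j)
           = (\<Sum>i=1..n. x i)^2 - (\<Sum>i=1..n. x i ^ 2)"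
proof (induction n)
  case 0
  then show ?case unfolding ordered_pairs_eq_Sigma by simp
next
  case (Suc n)
  let ?P = "\<lambda>n. {(i, j). 1 \<le> i \<and> i < j \<and> j \<le> n}"
  have new_pairs: "?P (Suc n) = ?P n \<union> (\<lambda>i. (i, Suc n)) ` {1..n}"
    by auto
  have "(\<Sum>(i, j)\<in>?P (Suc n). x i * x j)
          = (\<Sum>(i, j)\<in>?P n. x i * x j) + (\<Sum>i=1..n. x i) * x (Suc n)"
    unfolding new_pairs ordered_pairs_eq_Sigma
    by (subst sum.union_disjoint) (auto simp: sum.reindex inj_on_def sum_distrib_right)
  then show ?case
    using Suc.IH by (simp add: ordered_pairs_eq_Sigma power2_eq_square algebra_simps)
qed

lemma quadratic_count_bound:
  fixes k n m :: nat
  assumes "k \<le> n" and "n \<le> 2 * m"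
  shows "real k * (real n + 1 - real k) \<le> real n * real m"
proof (cases "k \<le> m")
  case True
  show ?thesis
  proof (cases "k = 0")
    case False
    then have "real n + 1 - real k \<le> real n" by simp
    with True show ?thesis
      by (metis mult.commute mult_mono of_nat_0_le_iff of_nat_le_iff)
  qed simp
next
  case False
  then have "real n + 1 - real k \<le> real m" using assms(2) by linarith
  moreover have "0 \<le> real n + 1 - real k" using assms(1) by simp
  ultimately show ?thesis
    using assms(1) by (simp add: mult_mono)
qed

lemma indicator_union_lower_bound:
  fixes A :: "nat \<Rightarrow> 'a set" and n m :: nat and \<omega> :: 'a
  assumes "n \<ge> 1" and "n \<le> 2 * m"
  shows "(1 / real m) * ((\<Sum>i=1..n. indicator (A i) \<omega>)
           - (2 / real n) * (\<Sum>(i, j)\<in>{(i, j). 1 \<le> i \<and> i < j \<and> j \<le> n}.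
                              indicator (A i \<inter> A j) \<omega>))
         \<le> (indicator (\<Union>i\<in>{1..n}. A i) \<omega> :: real)"
proof -
  define x :: "nat \<Rightarrow> real" where "x i = indicator (A i) \<omega>" for i
  define k where "k = card {i\<in>{1..n}. \<omega> \<in> A i}"
  have k_le_n: "k \<le> n"
    unfolding k_def by (metis (no_types, lifting) card_mono card_atLeastAtMost
        diff_Suc_1 finite_atLeastAtMost mem_Collect_eq subsetI)
  have sum_x: "(\<Sum>i=1..n. x i) = real k"
    unfolding x_def k_def by (simp add: indicator_def sum.If_cases Int_def)
  have sum_sq: "(\<Sum>i=1..n. x i ^ 2) = real k"
    using sum_x by (simp add: x_def indicator_def power2_eq_square)
  have sum_pairs: "(\<Sum>(i, j)\<in>{(i, j). 1 \<le> i \<and> i < j \<and> j \<le> n}. x i * x j)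
                     = (real k ^ 2 - real k) / 2"
    using sum_ordered_pairs_square[of x n] sum_x sum_sq by simp
  have inter: "indicator (A i \<inter> A j) \<omega> = x i * x j" for i j
    by (simp add: x_def indicator_inter_arith)
  show ?thesis
  proof (cases "k = 0")
    case True
    then show ?thesis
      unfolding inter x_def[symmetric] sum_x sum_pairs by simp
  next
    case False
    then have "\<omega> \<in> (\<Union>i\<in>{1..n}. A i)"
      unfolding k_def by (metis (no_types, lifting) UN_iff card.empty empty_Collect_eq)
    moreover have "real k * (real n + 1 - real k) \<le> real n * real m"
      using quadratic_count_bound k_le_n assms(2) .
    then have "real k - (2 / real n) * ((real k ^ 2 - real k) / 2) \<le> real m"
      using assms(1) by (simp add: field_simps power2_eq_square)
    ultimately show ?thesis
      using assms unfolding inter x_def[symmetric] sum_x sum_pairs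
      by (simp add: field_simps)
  qed
qed

lemma (in finite_measure) integrable_sum_indicator:
  assumes "finite I" and "\<And>i. i \<in> I \<Longrightarrow> B i \<in> sets M"
  shows "integrable M (\<lambda>\<omega>. \<Sum>i\<in>I. indicator (B i) \<omega> :: real)"
  using assms by (auto simp: emeasure_eq_measure intro!: Bochner_Integration.integrable_sum)

lemma (in finite_measure) integral_sum_indicator:
  assumes "finite I" and "\<And>i. i \<in> I \<Longrightarrow> B i \<in> sets M"
  shows "(\<integral>\<omega>. (\<Sum>i\<in>I. indicator (B i) \<omega> :: real) \<partial>M) = (\<Sum>i\<in>I. measure M (B i))"
  using assms
  by (auto simp: Bochner_Integration.integral_sum emeasure_eq_measure Int_absorb2
      sets.sets_into_space intro!: sum.cong)

lemma (in finite_measure) integral_pair_indicator_combination: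
  fixes A :: "nat \<Rightarrow> 'a set" and a b :: real
  assumes "\<And>i. i \<in> {1..n} \<Longrightarrow> A i \<in> sets M"
  defines "F \<equiv> \<lambda>\<omega>. a * ((\<Sum>i=1..n. indicator (A i) \<omega>)
              - b * (\<Sum>(i, j)\<in>{(i, j). 1 \<le> i \<and> i < j \<and> j \<le> n}. indicator (A i \<inter> A j) \<omega>))"
  shows "integrable M F"
    and "integral\<^sup>L M F = a * ((\<Sum>i=1..n. measure M (A i))
           - b * (\<Sum>(i, j)\<in>{(i, j). 1 \<le> i \<and> i < j \<and> j \<le> n}. measure M (A i \<inter> A j)))"
proof -
  define P where "P = {(i, j). 1 \<le> i \<and> i < j \<and> j \<le> n}"
  have finite_P: "finite P"
    unfolding P_def ordered_pairs_eq_Sigma by simp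
  have sets_AA: "A (fst p) \<inter> A (snd p) \<in> sets M" if "p \<in> P" for p
    using assms(1) that by (auto simp: P_def)
  note pair_indicator = case_prod_beta[of "\<lambda>i j. indicator (A i \<inter> A j) \<omega> :: real" for \<omega>]
  have integrable_sums:
    "integrable M (\<lambda>\<omega>. \<Sum>i=1..n. indicator (A i) \<omega> :: real)"
    "integrable M (\<lambda>\<omega>. \<Sum>(i, j)\<in>P. indicator (A i \<inter> A j) \<omega> :: real)"
    using integrable_sum_indicator[of "{1..n}" A] assms(1)
      integrable_sum_indicator[OF finite_P, of "\<lambda>p. A (fst p) \<inter> A (snd p)"] sets_AA
    by (auto simp: pair_indicator)
  have integral_sums:
    "(\<integral>\<omega>. (\<Sum>i=1..n. indicator (A i) \<omega> :: real) \<partial>M) = (\<Sum>i=1..n. measure M (A i))"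
    "(\<integral>\<omega>. (\<Sum>(i, j)\<in>P. indicator (A i \<inter> A j) \<omega> :: real) \<partial>M)
       = (\<Sum>(i, j)\<in>P. measure M (A i \<inter> A j))"
    using integral_sum_indicator[of "{1..n}" A] assms(1)
      integral_sum_indicator[OF finite_P, of "\<lambda>p. A (fst p) \<inter> A (snd p)"] sets_AA
    by (auto simp: pair_indicator case_prod_beta)
  show "integrable M F"
    using integrable_sums unfolding F_def P_def by simp
  show "integral\<^sup>L M F = a * ((\<Sum>i=1..n. measure M (A i))
          - b * (\<Sum>(i, j)\<in>{(i, j). 1 \<le> i \<and> i < j \<and> j \<le> n}. measure M (A i \<inter> A j)))"
    using integrable_sums unfolding F_def P_def[symmetric]
    by (simp add: integral_sums[simplified])
qed

theorem corollary2:
  fixes M :: "'a measure" and A :: "nat \<Rightarrow> 'a set" and n :: nat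
  assumes "prob_space M"
    and "n \<ge> 1"
    and "\<And>i. i \<in> {1..n} \<Longrightarrow> A i \<in> sets M"
  shows "measure M (\<Union>i\<in>{1..n}. A i) \<ge>
    (1 / real (nat \<lceil>real n / 2\<rceil>)) *
      ((\<Sum>i=1..n. measure M (A i))
        - (2 / real n) * (\<Sum>(i,j)\<in>{(i,j). 1 \<le> i \<and> i < j \<and> j \<le> n}. measure M (A i \<inter> A j)))"
proof -
  interpret prob_space M by fact
  define m where "m = nat \<lceil>real n / 2\<rceil>"
  define U where "U = (\<Union>i\<in>{1..n}. A i)"
  have U: "U \<in> sets M"
    unfolding U_def using assms(3) by auto
  note combination = integral_pair_indicator_combination
    [where n = n and A = A and a = "1 / real m" and b = "2 / real n", OF assms(3)]
  let ?F = "\<lambda>\<omega>. (1 / real m) * ((\<Sum>i=1..n. indicator (A i) \<omega>) - (2 / real n) *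
             (\<Sum>(i, j)\<in>{(i, j). 1 \<le> i \<and> i < j \<and> j \<le> n}. indicator (A i \<inter> A j) \<omega>))"
  have "(1 / real m) * ((\<Sum>i=1..n. measure M (A i))
          - (2 / real n) * (\<Sum>(i, j)\<in>{(i, j). 1 \<le> i \<and> i < j \<and> j \<le> n}. measure M (A i \<inter> A j)))
        = integral\<^sup>L M ?F"
    using combination(2) by (rule sym)
  also have "\<dots> \<le> integral\<^sup>L M (indicator U)"
  proof (rule integral_mono[OF combination(1)])
    show "integrable M (indicator U :: 'a \<Rightarrow> real)"
      using U by (simp add: emeasure_eq_measure)
    show "?F \<omega> \<le> indicator U \<omega>" for \<omega>
      unfolding U_def m_def using assms(2) by (intro indicator_union_lower_bound) linarith+
  qed
  also have "\<dots> = measure M U"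
    using U by (simp add: Int_absorb2 sets.sets_into_space)
  finally show ?thesis
    unfolding m_def U_def .
qed

end
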